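(* Let $\widehat{G}$ be a signed separable bigraph which contains no signed graph in $\mathcal{C}\cup D$ as an induced subgraph. Suppose that a vertex set $S$ minimally separates components $H$ and $H'$ of $\widehat G-S$. Then (i) $S$ induces a positive biclique in $\widehat{G}$, and (ii) any two vertices of $S$ in the same part of the bipartition of $\widehat{G}$ have a common neighbour in $H$ and a common neighbour in $H'$.
   Context: A signed graph is a finite simple graph each of whose edges is assigned a sign, positive or negative. A signed bigraph is a signed graph whose underlying graph is bipartite. A bigraph is separable if it contains an induced $2K_2$. An induced subgraph is obtained by deleting vertices only; $\widehat G$ contains $H$ as an induced subgraph if some induced subgraph is isomorphic to $H$ via a sign-preserving isomorphism. A signed graph is positive if all edges are positive and non-trivial if it has at least one edge. In a bigraph with bipartition $(X,Y)$, a subgraph $H$ is a biclique if every vertex of $V(H)\cap X$ is adjacent to every vertex of $V(H)\cap Y$. For a vertex set $S$ of $\widehat G$ and two distinct non-trivial connected components $H,H'$ of $\widehat G-S$, $S$ minimally separates $H$ and $H'$ if every vertex of $S$ has a neighbour in $H$ and a neighbour in $H'$. $\mathcal C$ is the set of all signed cycles of length $2k$ with $k\ge 3$ (all sign assignments). $D$ is the set of signed graphs on parts $\{a_1,a_2,a_3\}$, $\{b_1,b_2,b_3\}$ with edges exactly $a_1b_1,a_1b_2,a_2b_1,a_2b_2,a_2b_3,a_3b_2,a_3b_3$ (a 6-cycle $a_1b_1a_2b_3a_3b_2a_1$ plus the chord $a_2b_2$), where $a_2b_2$ is negative and the other six edges have arbitrary signs. *)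

theory Defs
  imports Main
begin

text \<open>A signed graph on vertex set V: E is the (symmetric, irreflexive) adjacency
relation, sg x y is the sign of the edge xy (True = positive, False = negative).\<close>

definition signed_bigraph ::
  "'a set \<Rightarrow> 'a set \<Rightarrow> 'a set \<Rightarrow> ('a \<Rightarrow> 'a \<Rightarrow> bool) \<Rightarrow> ('a \<Rightarrow> 'a \<Rightarrow> bool) \<Rightarrow> bool" where
  "signed_bigraph V X Y E sg \<longleftrightarrow>
     finite V \<and> V = X \<union> Y \<and> X \<inter> Y = {} \<and>
     (\<forall>x y. E x y \<longrightarrow> x \<in> V \<and> y \<in> V \<and> x \<noteq> y \<and> E y x \<and> sg x y = sg y x) \<and>
     (\<forall>x y. E x y \<longrightarrow> (x \<in> X \<longleftrightarrow> y \<in> Y))"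

text \<open>Contains an induced 2K_2.\<close>
definition separable :: "'a set \<Rightarrow> ('a \<Rightarrow> 'a \<Rightarrow> bool) \<Rightarrow> bool" where
  "separable V E \<longleftrightarrow> (\<exists>a b c d. a \<in> V \<and> b \<in> V \<and> c \<in> V \<and> d \<in> V \<and>
      distinct [a, b, c, d] \<and> E a b \<and> E c d \<and>
      \<not> E a c \<and> \<not> E a d \<and> \<not> E b c \<and> \<not> E b d)"

text \<open>Contains an induced (signed) cycle of length 2k, k \<ge> 3 (any signs): a member of C.\<close>
definition has_induced_long_even_cycle :: "'a set \<Rightarrow> ('a \<Rightarrow> 'a \<Rightarrow> bool) \<Rightarrow> bool" where
  "has_induced_long_even_cycle V E \<longleftrightarrow> (\<exists>vs k. k \<ge> 3 \<and> length vs = 2 * k \<and> distinct vs \<and>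
      set vs \<subseteq> V \<and>
      (\<forall>i < length vs. \<forall>j < length vs.
          E (vs ! i) (vs ! j) \<longleftrightarrow> (j = Suc i mod length vs \<or> i = Suc j mod length vs)))"

text \<open>Contains an induced member of D: the 6-cycle a1 b1 a2 b3 a3 b2 a1 plus the chord a2 b2,
with a2 b2 negative and other signs arbitrary.\<close>
definition has_induced_D :: "'a set \<Rightarrow> ('a \<Rightarrow> 'a \<Rightarrow> bool) \<Rightarrow> ('a \<Rightarrow> 'a \<Rightarrow> bool) \<Rightarrow> bool" where
  "has_induced_D V E sg \<longleftrightarrow> (\<exists>a1 a2 a3 b1 b2 b3.
      {a1, a2, a3, b1, b2, b3} \<subseteq> V \<and> distinct [a1, a2, a3, b1, b2, b3] \<and>
      E a1 b1 \<and> E a1 b2 \<and> E a2 b1 \<and> E a2 b2 \<and> E a2 b3 \<and> E a3 b2 \<and> E a3 b3 \<and>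
      \<not> E a1 b3 \<and> \<not> E a3 b1 \<and>
      \<not> E a1 a2 \<and> \<not> E a1 a3 \<and> \<not> E a2 a3 \<and>
      \<not> E b1 b2 \<and> \<not> E b1 b3 \<and> \<not> E b2 b3 \<and>
      \<not> sg a2 b2)"

definition reach_in :: "'a set \<Rightarrow> ('a \<Rightarrow> 'a \<Rightarrow> bool) \<Rightarrow> 'a \<Rightarrow> 'a \<Rightarrow> bool" where
  "reach_in W E = (\<lambda>x y. x \<in> W \<and> y \<in> W \<and> E x y)\<^sup>*\<^sup>*"

definition is_component :: "'a set \<Rightarrow> ('a \<Rightarrow> 'a \<Rightarrow> bool) \<Rightarrow> 'a set \<Rightarrow> bool" where
  "is_component W E C \<longleftrightarrow> (\<exists>u \<in> W. C = {v. reach_in W E u v})"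

definition nontrivial :: "('a \<Rightarrow> 'a \<Rightarrow> bool) \<Rightarrow> 'a set \<Rightarrow> bool" where
  "nontrivial E C \<longleftrightarrow> (\<exists>x \<in> C. \<exists>y \<in> C. E x y)"

definition minimally_separates ::
  "'a set \<Rightarrow> ('a \<Rightarrow> 'a \<Rightarrow> bool) \<Rightarrow> 'a set \<Rightarrow> 'a set \<Rightarrow> 'a set \<Rightarrow> bool" where
  "minimally_separates V E S H H' \<longleftrightarrow>
     S \<subseteq> V \<and>
     is_component (V - S) E H \<and> is_component (V - S) E H' \<and> H \<noteq> H' \<and>
     nontrivial E H \<and> nontrivial E H' \<and>
     (\<forall>s \<in> S. (\<exists>h \<in> H. E s h) \<and> (\<exists>h \<in> H'. E s h))"

definition positive_biclique ::
  "'a set \<Rightarrow> 'a set \<Rightarrow> ('a \<Rightarrow> 'a \<Rightarrow> bool) \<Rightarrow> ('a \<Rightarrow> 'a \<Rightarrow> bool) \<Rightarrow> 'a set \<Rightarrow> bool" where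
  "positive_biclique X Y E sg S \<longleftrightarrow>
     (\<forall>x \<in> S \<inter> X. \<forall>y \<in> S \<inter> Y. E x y) \<and>
     (\<forall>x \<in> S. \<forall>y \<in> S. E x y \<longrightarrow> sg x y)"

end

theory Submission
  imports Defs
begin

text \<open>Let u, v be distinct vertices of S. Each of H and H' contains the interior of a
chordless u--v path, P and Q, and no edge joins the two interiors. If u and v are not adjacent,
P and Q together form an induced cycle, which in a bigraph is even and therefore has length at
most 4 in the absence of members of C. Counting parities, this forces adjacency when u, v lie in
different parts, and P, Q of length 2 (common neighbours) when they lie in the same part. If uv
is an edge, P + uv and Q + uv are induced even cycles of length at most 4, so P and Q have
length 3; together with the chord uv they form the 6-cycle of D, so uv cannot be negative.\<close>

section \<open>Connected components\<close>

lemma reach_in_symp: "symp E \<Longrightarrow> symp (reach_in W E)"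
  unfolding reach_in_def by (intro symp_rtranclp sympI) (blast dest: sympD)

lemma reach_in_trans: "reach_in W E a b \<Longrightarrow> reach_in W E b c \<Longrightarrow> reach_in W E a c"
  unfolding reach_in_def by (rule rtranclp_trans)

lemma reach_in_mem: "reach_in W E a b \<Longrightarrow> a \<in> W \<Longrightarrow> b \<in> W"
  unfolding reach_in_def by (induction rule: rtranclp_induct) auto

lemma component_subset: "is_component W E H \<Longrightarrow> H \<subseteq> W"
proof
  fix b assume "is_component W E H" "b \<in> H"
  then obtain u where "u \<in> W" "reach_in W E u b" unfolding is_component_def by blast
  then show "b \<in> W" by (rule reach_in_mem[rotated])
qed

lemma component_eq_reach_class:
  assumes "symp E" "is_component W E H" "z \<in> H"
  shows "H = {v. reach_in W E z v}"
proof -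
  obtain u where H: "H = {v. reach_in W E u v}"
    using assms(2) unfolding is_component_def by blast
  have uz: "reach_in W E u z" using H assms(3) by blast
  have zu: "reach_in W E z u" using sympD[OF reach_in_symp[OF assms(1)] uz] .
  show ?thesis
  proof (intro set_eqI iffI)
    fix v assume "v \<in> H"
    then show "v \<in> {v. reach_in W E z v}" using reach_in_trans[OF zu] H by blast
  next
    fix v assume "v \<in> {v. reach_in W E z v}"
    then show "v \<in> H" using reach_in_trans[OF uz] H by blast
  qed
qed

lemma component_reach_in:
  assumes "symp E" "is_component W E H" "a \<in> H" "b \<in> H"
  shows "reach_in W E a b"
  using component_eq_reach_class[OF assms(1-3)] assms(4) by blast

lemma components_disjoint:
  assumes "symp E" "is_component W E H" "is_component W E H'" "H \<noteq> H'"
  shows "H \<inter> H' = {}"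
proof (rule ccontr)
  assume "H \<inter> H' \<noteq> {}"
  then obtain z where "z \<in> H" "z \<in> H'" by blast
  then have "H = H'" using component_eq_reach_class assms(1-3) by metis
  then show False using assms(4) by contradiction
qed

lemma component_closed:
  assumes "is_component W E H" "a \<in> H" "b \<in> W" "E a b"
  shows "b \<in> H"
proof -
  obtain u where H: "H = {v. reach_in W E u v}"
    using assms(1) unfolding is_component_def by blast
  have "a \<in> W" using component_subset[OF assms(1)] assms(2) by blast
  with assms(3,4) have "reach_in W E a b" unfolding reach_in_def by auto
  moreover have "reach_in W E u a" using H assms(2) by blast
  ultimately have "reach_in W E u b" using reach_in_trans by metis
  then show ?thesis using H by blast
qed

lemma component_connected:
  assumes "symp E" "is_component W E H" "a \<in> H" "b \<in> H"
  shows "reach_in H E a b"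
proof -
  have "reach_in H E a b \<and> b \<in> H" if "reach_in W E a b" for b
    using that unfolding reach_in_def
  proof (induction rule: rtranclp_induct)
    case (step y z)
    then have "z \<in> H" using component_closed[OF assms(2)] by blast
    with step show ?case by (metis (mono_tags, lifting) rtranclp.rtrancl_into_rtrancl)
  qed (use assms(3) in simp)
  then show ?thesis using component_reach_in[OF assms] by blast
qed

lemma reach_in_walk:
  assumes "reach_in W E a b" "a \<in> W"
  shows "\<exists>q. successively E q \<and> q \<noteq> [] \<and> hd q = a \<and> last q = b \<and> set q \<subseteq> W"
  using assms(1) unfolding reach_in_def
proof (induction rule: rtranclp_induct)
  case base
  then show ?case using assms(2) by (intro exI[of _ "[a]"]) auto
next
  case (step y z)
  then obtain q where "successively E q" "q \<noteq> []" "hd q = a" "last q = y" "set q \<subseteq> W" by blast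
  with step(2) show ?case by (intro exI[of _ "q @ [z]"]) (auto simp: successively_append_iff)
qed

section \<open>Chordless paths\<close>

definition walk_through :: "('a \<Rightarrow> 'a \<Rightarrow> bool) \<Rightarrow> 'a set \<Rightarrow> 'a \<Rightarrow> 'a \<Rightarrow> 'a list \<Rightarrow> bool" where
  "walk_through E W x y p \<longleftrightarrow> successively E p \<and> 3 \<le> length p \<and>
     p ! 0 = x \<and> p ! (length p - 1) = y \<and> (\<forall>k. 0 < k \<longrightarrow> k < length p - 1 \<longrightarrow> p ! k \<in> W)"

lemma successively_take_drop:
  assumes "successively E p"
  shows "successively E (take n p)" "successively E (drop n p)"
  using assms successively_append_iff[of E "take n p" "drop n p"] by simp_all

lemma walk_through_shortcut:
  assumes p: "walk_through E W x y p" and ij: "i < j" "j < length p" "(i, j) \<noteq> (0, length p - 1)"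
    and e: "E (p ! i) (p ! j)"
  shows "walk_through E W x y (take (Suc i) p @ drop j p)"
proof -
  let ?q = "take (Suc i) p @ drop j p"
  have len: "length ?q = Suc i + (length p - j)" using ij by simp
  have nth: "?q ! k = (if k \<le> i then p ! k else p ! (j + (k - Suc i)))" if "k < length ?q" for k
    using ij that by (auto simp: nth_append)
  have "last (take (Suc i) p) = p ! i" using ij by (subst last_conv_nth) auto
  then have "successively E ?q"
    using p ij e unfolding walk_through_def
    by (auto simp: successively_append_iff successively_take_drop hd_drop_conv_nth)
  moreover have "3 \<le> length ?q" using ij len p unfolding walk_through_def by auto
  moreover have "?q ! 0 = x" using p ij by (simp add: walk_through_def nth_append)
  moreover have "?q ! (length ?q - 1) = y"
  proof -
    have "j + (length ?q - 1 - Suc i) = length p - 1" using len ij by linarith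
    then show ?thesis using p nth[of "length ?q - 1"] len ij unfolding walk_through_def by auto
  qed
  moreover have "?q ! k \<in> W" if "0 < k" "k < length ?q - 1" for k
  proof (cases "k \<le> i")
    case True
    then show ?thesis using p ij that nth[of k] unfolding walk_through_def by auto
  next
    case False
    then have "0 < j + (k - Suc i)" "j + (k - Suc i) < length p - 1" using ij that len by linarith+
    then show ?thesis using p False that len nth[of k] unfolding walk_through_def by auto
  qed
  ultimately show ?thesis unfolding walk_through_def by blast
qed

text \<open>The endpoints may be adjacent, so the same notion yields an induced cycle when a path is
closed by the edge xy and when two paths are glued at non-adjacent ends.\<close>

definition chordless_path :: "('a \<Rightarrow> 'a \<Rightarrow> bool) \<Rightarrow> 'a set \<Rightarrow> 'a \<Rightarrow> 'a \<Rightarrow> 'a list \<Rightarrow> bool" where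
  "chordless_path E W x y p \<longleftrightarrow> walk_through E W x y p \<and> distinct p \<and>
     (\<forall>i j. Suc i < j \<longrightarrow> j < length p \<longrightarrow> (i, j) \<noteq> (0, length p - 1) \<longrightarrow> \<not> E (p ! i) (p ! j))"

lemma shortest_walk_through_chordless:
  assumes p: "walk_through E W x y p" and xy: "x \<notin> W" "y \<notin> W" "x \<noteq> y"
    and shortest: "\<And>q. walk_through E W x y q \<Longrightarrow> length p \<le> length q"
  shows "chordless_path E W x y p"
proof -
  have no_shortcut: False
    if "i < j" "j < length p" "(i, j) \<noteq> (0, length p - 1)" "E (p ! i) (p ! j)" "Suc i < j" for i j
    using shortest[OF walk_through_shortcut[OF p that(1-4)]] that by simp
  have "distinct p"
  proof (rule ccontr)
    assume "\<not> distinct p"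
    then obtain i j where ij: "i < j" "j < length p" "p ! i = p ! j"
      by (metis distinct_conv_nth linorder_neqE_nat)
    have interior: "p ! k \<in> W" if "0 < k" "k < length p - 1" for k
      using p that unfolding walk_through_def by blast
    have ends: "p ! 0 = x" "p ! (length p - 1) = y" using p unfolding walk_through_def by blast+
    have "i \<noteq> 0"
    proof
      assume "i = 0"
      then have "p ! j = x" using ij ends by simp
      moreover have "j = length p - 1 \<or> p ! j \<in> W" using interior[of j] ij by linarith
      ultimately show False using ends xy by auto
    qed
    moreover have "j \<noteq> length p - 1"
    proof
      assume "j = length p - 1"
      then have "p ! i = y" "p ! i \<in> W" using ij ends interior[of i] \<open>i \<noteq> 0\<close> by auto
      then show False using xy by simp
    qed
    moreover have "E (p ! (i - 1)) (p ! j)"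
      using p ij \<open>i \<noteq> 0\<close> successively_nth[of E p "i - 1"] unfolding walk_through_def by simp
    ultimately show False using no_shortcut[of "i - 1" j] ij by fastforce
  qed
  moreover have "\<not> E (p ! i) (p ! j)"
    if "Suc i < j" "j < length p" "(i, j) \<noteq> (0, length p - 1)" for i j
    using no_shortcut[of i j] that by (meson Suc_lessD)
  ultimately show ?thesis using p unfolding chordless_path_def by blast
qed

lemma chordless_path_exists:
  assumes xy: "x \<notin> W" "y \<notin> W" "x \<noteq> y" and edges: "E x a" "E b y"
    and a: "a \<in> W" and ab: "reach_in W E a b"
  shows "\<exists>p. chordless_path E W x y p"
proof -
  obtain q where q: "successively E q" "q \<noteq> []" "hd q = a" "last q = b" "set q \<subseteq> W"
    using reach_in_walk[OF ab a] by blast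
  have "walk_through E W x y (x # q @ [y])"
    unfolding walk_through_def
  proof (intro conjI allI impI)
    show "successively E (x # q @ [y])"
      using q edges by (simp add: successively_Cons successively_append_iff hd_append)
    show "(x # q @ [y]) ! k \<in> W" if "0 < k" "k < length (x # q @ [y]) - 1" for k
      using that q(5) by (cases k) (auto simp: nth_append)
  qed (use q(2) in \<open>auto simp: nth_append Suc_leI\<close>)
  from ex_has_least_nat[where P = "walk_through E W x y", OF this, of length] obtain p
    where p: "walk_through E W x y p"
      and shortest: "\<And>q. walk_through E W x y q \<Longrightarrow> length p \<le> length q"
    by blast
  show ?thesis using shortest_walk_through_chordless[OF p xy shortest] by blast
qed

lemma chordless_path_through_component:
  assumes "symp E" "is_component W E C" "u \<notin> W" "v \<notin> W" "u \<noteq> v"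
    and "E u a" "a \<in> C" "E v b" "b \<in> C"
  shows "\<exists>p. chordless_path E C u v p"
proof (rule chordless_path_exists)
  show "u \<notin> C" "v \<notin> C" using assms(3,4) component_subset[OF assms(2)] by blast+
  show "E b v" using assms(1,8) by (rule sympD)
  show "reach_in C E a b" using component_connected[OF assms(1,2,7,9)] .
qed (use assms in auto)

lemma chordless_pathD:
  assumes "chordless_path E W x y p"
  shows "successively E p" "3 \<le> length p" "p ! 0 = x" "p ! (length p - 1) = y"
    "\<And>k. 0 < k \<Longrightarrow> k < length p - 1 \<Longrightarrow> p ! k \<in> W" "distinct p"
  using assms unfolding chordless_path_def walk_through_def by blast+

lemma chordless_path_ends_distinct:
  assumes "chordless_path E W x y p"
  shows "x \<noteq> y"
proof -
  have "p \<noteq> []" "0 < length p - 1" "length p - 1 < length p"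
    using chordless_pathD(2)[OF assms] by auto
  then show ?thesis
    using chordless_pathD(3,4,6)[OF assms] nth_eq_iff_index_eq[of p 0 "length p - 1"] by auto
qed

lemma chordless_path_butlast_subset:
  assumes "chordless_path E W x y p"
  shows "set (butlast p) \<subseteq> insert x W"
proof
  fix z assume "z \<in> set (butlast p)"
  then obtain k where "k < length p - 1" "z = p ! k" by (auto simp: in_set_conv_nth nth_butlast)
  then show "z \<in> insert x W" using chordless_pathD[OF assms] by (cases k) auto
qed

lemma chordless_path_adj_iff:
  assumes p: "chordless_path E W x y p" and ij: "i < j" "j < length p"
  shows "E (p ! i) (p ! j) \<longleftrightarrow> j = Suc i \<or> (i = 0 \<and> j = length p - 1 \<and> E x y)"
proof (cases "j = Suc i")
  case True
  then show ?thesis using ij successively_nth[OF chordless_pathD(1)[OF p]] by simp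
next
  case False
  then have "Suc i < j" using ij by simp
  show ?thesis
  proof (cases "(i, j) = (0, length p - 1)")
    case True
    then show ?thesis using False chordless_pathD(3,4)[OF p] by simp
  next
    case not_ends: False
    then have "\<not> E (p ! i) (p ! j)"
      using p \<open>Suc i < j\<close> ij unfolding chordless_path_def by blast
    then show ?thesis using False not_ends by auto
  qed
qed

lemma chordless_path_length3:
  assumes p: "chordless_path E W x y p" and len: "length p = 3"
  shows "\<exists>w\<in>W. E x w \<and> E w y"
proof -
  have "p ! 1 \<in> W" "E (p ! 0) (p ! 1)" "E (p ! 1) (p ! 2)"
    using chordless_pathD(5)[OF p, of 1] successively_nth[OF chordless_pathD(1)[OF p]] len
    by (simp_all add: numeral_2_eq_2)
  then show ?thesis using chordless_pathD(3,4)[OF p] len by auto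
qed

lemma chordless_path_length4:
  assumes p: "chordless_path E W x y p" and len: "length p = 4"
  obtains a b where "a \<in> W" "b \<in> W" "E x a" "E a b" "E b y" "\<not> E x b" "\<not> E a y"
    "distinct [x, a, b, y]"
proof -
  have ends: "p ! 0 = x" "p ! 3 = y" using chordless_pathD(3,4)[OF p] len by simp_all
  have p_eq: "p = [x, p ! 1, p ! 2, y]"
    using len ends by (simp add: list_eq_iff_nth_eq less_Suc_eq numeral_eq_Suc)
  have adj: "E (p ! i) (p ! j) \<longleftrightarrow> j = Suc i \<or> (i = 0 \<and> j = 3 \<and> E x y)" if "i < j" "j < 4" for i j
    using chordless_path_adj_iff[OF p that(1)] that len by simp
  have "p ! 1 \<in> W" "p ! 2 \<in> W" "distinct p"
    using chordless_pathD(5,6)[OF p] len by auto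
  moreover have "E x (p ! 1)" "E (p ! 1) (p ! 2)" "E (p ! 2) y" "\<not> E x (p ! 2)" "\<not> E (p ! 1) y"
    using adj[of 0 1] adj[of 1 2] adj[of 2 3] adj[of 0 2] adj[of 1 3] ends
    by (simp_all add: numeral_eq_Suc)
  ultimately show ?thesis using that p_eq by metis
qed

section \<open>Induced cycles\<close>

definition induced_cycle :: "('a \<Rightarrow> 'a \<Rightarrow> bool) \<Rightarrow> 'a list \<Rightarrow> bool" where
  "induced_cycle E vs \<longleftrightarrow> distinct vs \<and>
     (\<forall>i j. i < j \<longrightarrow> j < length vs \<longrightarrow>
        (E (vs ! i) (vs ! j) \<longleftrightarrow> j = Suc i \<or> (i = 0 \<and> j = length vs - 1)))"

lemma induced_cycle_adj_mod:
  assumes "symp E" "irreflp E" "induced_cycle E vs" "3 \<le> length vs"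
    and "i < length vs" "j < length vs"
  shows "E (vs ! i) (vs ! j) \<longleftrightarrow> j = Suc i mod length vs \<or> i = Suc j mod length vs"
proof -
  let ?n = "length vs"
  have ordered: "E (vs ! i) (vs ! j) \<longleftrightarrow> j = Suc i mod ?n \<or> i = Suc j mod ?n"
    if "i < j" "j < ?n" for i j
  proof -
    have "Suc i mod ?n = Suc i" using that by simp
    moreover have "i = Suc j mod ?n \<longleftrightarrow> i = 0 \<and> j = ?n - 1"
      using that by (cases "Suc j = ?n") auto
    ultimately show ?thesis using assms(3) that unfolding induced_cycle_def by auto
  qed
  consider "i < j" | "i = j" | "j < i" by linarith
  then show ?thesis
  proof cases
    case 1
    then show ?thesis using ordered assms(6) by blast
  next
    case 2
    have "Suc i mod ?n \<noteq> i" using assms(4,5) by (cases "Suc i = ?n") auto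
    then show ?thesis using 2 assms(2) by (simp add: irreflp_def)
  next
    case 3
    have "E (vs ! i) (vs ! j) \<longleftrightarrow> E (vs ! j) (vs ! i)" using assms(1) by (blast dest: sympD)
    then show ?thesis using ordered[of j i] 3 assms(5) by blast
  qed
qed

lemma has_induced_long_even_cycleI:
  assumes "symp E" "irreflp E" "induced_cycle E vs" "set vs \<subseteq> V"
    and "even (length vs)" "6 \<le> length vs"
  shows "has_induced_long_even_cycle V E"
proof -
  obtain k where k: "length vs = 2 * k" using assms(5) by blast
  then have "3 \<le> k" using assms(6) by linarith
  moreover have "distinct vs" using assms(3) unfolding induced_cycle_def by blast
  ultimately show ?thesis
    unfolding has_induced_long_even_cycle_def
    using k assms(4) induced_cycle_adj_mod[OF assms(1-3)] assms(6)
    by (intro exI[of _ vs] exI[of _ k]) simp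
qed

lemma chordless_path_closed_induced_cycle:
  assumes "chordless_path E W x y p" "E x y"
  shows "induced_cycle E p"
  using assms chordless_path_adj_iff[OF assms(1)] unfolding induced_cycle_def chordless_path_def
  by simp

lemma nth_butlast_append_butlast:
  assumes "last p = hd q" "p \<noteq> []" "q \<noteq> []" "k < length p - 1 + (length q - 1)"
  shows "(butlast p @ butlast q) ! k = (if k \<le> length p - 1 then p ! k else q ! (k - (length p - 1)))"
  using assms by (auto simp: nth_append nth_butlast last_conv_nth hd_conv_nth)

lemma chordless_paths_glued_induced_cycle:
  assumes p: "chordless_path E W1 x y p" and q: "chordless_path E W2 y x q"
    and sym: "symp E" and not_xy: "\<not> E x y"
    and disjoint: "W1 \<inter> W2 = {}" and no_edges: "\<forall>a\<in>W1. \<forall>b\<in>W2. \<not> E a b"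
    and outside: "x \<notin> W2" "y \<notin> W1"
  shows "induced_cycle E (butlast p @ butlast q)"
proof -
  define a where "a = length p - 1"
  define b where "b = length q - 1"
  let ?vs = "butlast p @ butlast q"
  note P = chordless_pathD[OF p, folded a_def] and Q = chordless_pathD[OF q, folded b_def]
  have ab: "2 \<le> a" "2 \<le> b" using P(2) Q(2) unfolding a_def b_def by simp_all
  have adj_p: "E (p ! i) (p ! j) \<longleftrightarrow> j = Suc i" if "i < j" "j \<le> a" for i j
    using chordless_path_adj_iff[OF p that(1)] that not_xy unfolding a_def by auto
  have adj_q: "E (q ! i) (q ! j) \<longleftrightarrow> j = Suc i" if "i < j" "j \<le> b" for i j
    using chordless_path_adj_iff[OF q that(1)] that not_xy sym unfolding b_def by (auto dest: sympD)
  have nonempty: "p \<noteq> []" "q \<noteq> []" using P(2) Q(2) by auto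
  then have "last p = hd q" using P(4) Q(3) unfolding a_def by (simp add: last_conv_nth hd_conv_nth)
  note vs = nth_butlast_append_butlast[OF this nonempty, folded a_def b_def]
  have "set (butlast p) \<inter> set (butlast q) = {}"
    using chordless_path_butlast_subset[OF p] chordless_path_butlast_subset[OF q]
      chordless_path_ends_distinct[OF p] outside disjoint by blast
  then have "distinct ?vs" using P(6) Q(6) by (simp add: distinct_butlast)
  moreover have "E (?vs ! i) (?vs ! j) \<longleftrightarrow> j = Suc i \<or> (i = 0 \<and> j = a + b - 1)"
    if ij: "i < j" "j < a + b" for i j
  proof -
    consider "j \<le> a" | "a < i" | "i \<le> a" "a < j" by linarith
    then show ?thesis
    proof cases
      case 1
      then show ?thesis using adj_p[OF ij(1)] vs ij ab by auto
    next
      case 2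
      then have "E (?vs ! i) (?vs ! j) \<longleftrightarrow> j - a = Suc (i - a)"
        using adj_q[of "i - a" "j - a"] vs ij by auto
      then show ?thesis using 2 ij ab by auto
    next
      case 3
      then have vs_j: "?vs ! j = q ! (j - a)" and j_int: "0 < j - a" "j - a < b"
        using vs ij by auto
      consider "i = 0" | "0 < i" "i < a" | "i = a" using 3 by linarith
      then show ?thesis
      proof cases
        case 1
        have "E x (q ! (j - a)) \<longleftrightarrow> E (q ! (j - a)) (q ! b)" using sym Q(4) by (metis sympD)
        also have "\<dots> \<longleftrightarrow> b = Suc (j - a)" using adj_q j_int by simp
        finally show ?thesis using 1 vs_j vs P(3) 3 ab by auto
      next
        case 2
        then have "\<not> E (p ! i) (q ! (j - a))" using no_edges P(5) Q(5) j_int by blast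
        then show ?thesis using 2 vs_j vs 3 by auto
      next
        case 4: 3
        then show ?thesis using adj_q[of 0 "j - a"] vs_j vs P(4) Q(3) j_int ab by auto
      qed
    qed
  qed
  ultimately show ?thesis unfolding induced_cycle_def using P(2) Q(2) ab
    unfolding a_def b_def by simp
qed

section \<open>Minimal separators in bigraphs without long even holes\<close>

locale long_even_hole_free_bigraph =
  fixes V X :: "'a set" and E :: "'a \<Rightarrow> 'a \<Rightarrow> bool"
  assumes sym: "symp E"
    and edge_in_V: "E a b \<Longrightarrow> a \<in> V"
    and bipartite: "E a b \<Longrightarrow> a \<in> X \<longleftrightarrow> b \<notin> X"
    and no_long_even_hole: "\<not> has_induced_long_even_cycle V E"
begin

lemma irrefl: "irreflp E"
  using bipartite by (auto intro: irreflpI)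

lemma adj_commute: "E a b \<longleftrightarrow> E b a"
  using sym by (blast dest: sympD)

lemma walk_parity:
  assumes "successively E p" "k < length p"
  shows "p ! k \<in> X \<longleftrightarrow> (p ! 0 \<in> X \<longleftrightarrow> even k)"
  using assms(2)
proof (induction k)
  case (Suc k)
  then have "E (p ! k) (p ! Suc k)" using assms(1) successively_nth by blast
  then show ?case using Suc bipartite by auto
qed simp

lemma walk_in_V:
  assumes "successively E p" "2 \<le> length p"
  shows "set p \<subseteq> V"
proof
  fix z assume "z \<in> set p"
  then obtain k where k: "k < length p" "z = p ! k" by (auto simp: in_set_conv_nth)
  show "z \<in> V"
  proof (cases "Suc k < length p")
    case True
    then show ?thesis using assms(1) k edge_in_V successively_nth by metis
  next
    case False
    then have "E (p ! k) (p ! (k - 1))"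
      using assms k successively_nth[of E p "k - 1"] adj_commute by simp
    then show ?thesis using k edge_in_V by blast
  qed
qed

lemma chordless_path_parity:
  assumes "chordless_path E W x y p"
  shows "odd (length p) \<longleftrightarrow> (x \<in> X \<longleftrightarrow> y \<in> X)"
  using walk_parity[of p "length p - 1"] chordless_pathD(1-4)[OF assms] by auto

lemma chordless_path_in_V:
  assumes "chordless_path E W x y p"
  shows "set p \<subseteq> V"
  using walk_in_V chordless_pathD(1,2)[OF assms] by simp

lemma closed_chordless_path_length:
  assumes "chordless_path E W x y p" "E x y"
  shows "length p = 4"
proof -
  have "even (length p)" using chordless_path_parity[OF assms(1)] bipartite[OF assms(2)] by auto
  moreover note chordless_pathD(2)[OF assms(1)]
  moreover have "\<not> 6 \<le> length p"
    using has_induced_long_even_cycleI[OF sym irrefl chordless_path_closed_induced_cycle[OF assms]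
      chordless_path_in_V[OF assms(1)] \<open>even (length p)\<close>] no_long_even_hole by blast
  ultimately show ?thesis by presburger
qed

lemma glued_chordless_paths_length:
  assumes p: "chordless_path E W1 x y p" and q: "chordless_path E W2 y x q"
    and "\<not> E x y" "W1 \<inter> W2 = {}" "\<forall>a\<in>W1. \<forall>b\<in>W2. \<not> E a b" "x \<notin> W2" "y \<notin> W1"
  shows "length p + length q \<le> 6"
proof -
  let ?vs = "butlast p @ butlast q"
  have len: "length ?vs + 2 = length p + length q"
    using chordless_pathD(2)[OF p] chordless_pathD(2)[OF q] by simp
  have "even (length p + length q)"
    using chordless_path_parity[OF p] chordless_path_parity[OF q] by auto
  then have "even (length ?vs)" using len by presburger
  moreover have "set ?vs \<subseteq> V"
    using chordless_path_in_V[OF p] chordless_path_in_V[OF q] by (auto dest: in_set_butlastD)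
  moreover have "induced_cycle E ?vs"
    using chordless_paths_glued_induced_cycle[OF p q sym assms(3-7)] .
  ultimately have "\<not> 6 \<le> length ?vs"
    using has_induced_long_even_cycleI[OF sym irrefl] no_long_even_hole by blast
  then show ?thesis using len \<open>even (length p + length q)\<close> by presburger
qed

context
  fixes S H H' :: "'a set"
  assumes separates: "minimally_separates V E S H H'"
begin

lemma separated_components_disjoint: "H \<inter> H' = {}"
  using separates components_disjoint[OF sym] unfolding minimally_separates_def by blast

lemma separator_outside_components: "s \<in> S \<Longrightarrow> s \<notin> H \<and> s \<notin> H'"
  using separates component_subset unfolding minimally_separates_def by blast

lemma no_edge_between_separated_components:
  assumes "a \<in> H" "b \<in> H'"
  shows "\<not> E a b"
proof
  assume "E a b"
  have cH: "is_component (V - S) E H" and cH': "is_component (V - S) E H'"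
    using separates unfolding minimally_separates_def by blast+
  have "b \<in> V - S" using component_subset[OF cH'] assms(2) by blast
  then have "b \<in> H" using component_closed[OF cH assms(1)] \<open>E a b\<close> by blast
  then show False using assms(2) separated_components_disjoint by blast
qed

lemma separator_chordless_path:
  assumes "C = H \<or> C = H'" "u \<in> S" "v \<in> S" "u \<noteq> v"
  shows "\<exists>p. chordless_path E C u v p"
proof -
  have "is_component (V - S) E C" and "\<exists>a\<in>C. E u a" "\<exists>b\<in>C. E v b"
    using separates assms unfolding minimally_separates_def by auto
  moreover have "u \<notin> V - S" "v \<notin> V - S" using assms(2,3) by blast+
  ultimately show ?thesis
    using chordless_path_through_component[OF sym _ _ _ assms(4)] by blast
qed

lemma separator_short_paths:
  assumes "u \<in> S" "v \<in> S" "u \<noteq> v" "\<not> E u v"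
  obtains p q where "chordless_path E H u v p" "chordless_path E H' v u q"
    "length p + length q \<le> 6"
proof -
  obtain p q where p: "chordless_path E H u v p" and q: "chordless_path E H' v u q"
    using separator_chordless_path assms(1-3) by metis
  have "length p + length q \<le> 6"
    using glued_chordless_paths_length[OF p q assms(4) separated_components_disjoint]
      no_edge_between_separated_components separator_outside_components assms(1,2) by blast
  with p q show ?thesis using that by blast
qed

lemma separator_common_neighbours:
  assumes "u \<in> S" "v \<in> S" "u \<noteq> v" "u \<in> X \<longleftrightarrow> v \<in> X"
  shows "(\<exists>w\<in>H. E u w \<and> E v w) \<and> (\<exists>w\<in>H'. E u w \<and> E v w)"
proof -
  have "\<not> E u v" using bipartite assms(4) by blast
  then obtain p q where p: "chordless_path E H u v p" and q: "chordless_path E H' v u q"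
    and short: "length p + length q \<le> 6"
    using separator_short_paths assms(1-3) by blast
  have "odd (length p)" "odd (length q)"
    using chordless_path_parity[OF p] chordless_path_parity[OF q] assms(4) by auto
  with short chordless_pathD(2)[OF p] chordless_pathD(2)[OF q]
  have "length p = 3" "length q = 3" by presburger+
  then show ?thesis
    using chordless_path_length3[OF p] chordless_path_length3[OF q] adj_commute by blast
qed

lemma separator_adjacent:
  assumes "u \<in> S" "v \<in> S" "u \<in> X \<longleftrightarrow> v \<notin> X"
  shows "E u v"
proof (rule ccontr)
  assume "\<not> E u v"
  moreover have "u \<noteq> v" using assms(3) by blast
  ultimately obtain p q where p: "chordless_path E H u v p" and q: "chordless_path E H' v u q"
    and short: "length p + length q \<le> 6"
    using separator_short_paths assms(1,2) by blast
  have "even (length p)" "even (length q)"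
    using chordless_path_parity[OF p] chordless_path_parity[OF q] assms(3) by auto
  with short chordless_pathD(2)[OF p] chordless_pathD(2)[OF q] show False
    by presburger
qed

lemma separator_negative_edge_induces_D:
  assumes "u \<in> S" "v \<in> S" "E u v" "\<not> sg u v"
  shows "has_induced_D V E sg"
proof -
  have "u \<noteq> v" using assms(3) irrefl by (auto simp: irreflp_def)
  then obtain p q where p: "chordless_path E H u v p" and q: "chordless_path E H' u v q"
    using separator_chordless_path assms(1,2) by metis
  obtain a b where ab: "a \<in> H" "b \<in> H" "E u a" "E a b" "E b v" "\<not> E u b" "\<not> E a v"
    "distinct [u, a, b, v]"
    using chordless_path_length4[OF p closed_chordless_path_length[OF p assms(3)]] by blast
  obtain c d where cd: "c \<in> H'" "d \<in> H'" "E u c" "E c d" "E d v" "\<not> E u d" "\<not> E c v"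
    "distinct [u, c, d, v]"
    using chordless_path_length4[OF q closed_chordless_path_length[OF q assms(3)]] by blast
  have across: "\<not> E a c" "\<not> E d a" "\<not> E b c" "\<not> E b d"
    using ab cd no_edge_between_separated_components adj_commute by blast+
  have "a \<noteq> c" "a \<noteq> d" "b \<noteq> c" "b \<noteq> d"
    using ab cd separated_components_disjoint by blast+
  then have "distinct [b, u, d, a, v, c]" using ab(8) cd(8) by auto
  moreover have "E b a" "E d c" "E v u" "\<not> E b u" "\<not> E v c"
    using ab cd assms(3) adj_commute by blast+
  moreover have "{b, u, d, a, v, c} \<subseteq> V"
    using edge_in_V ab(3-5) cd(4,5) \<open>E v u\<close> by simp
  \<comment> \<open>The 6-cycle u a b v d c with the chord uv, read as a_2 b_1 a_1 b_2 a_3 b_3 in D.\<close>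
  ultimately show ?thesis
    unfolding has_induced_D_def using ab cd across assms(3,4)
    by (intro exI[of _ b] exI[of _ u] exI[of _ d] exI[of _ a] exI[of _ v] exI[of _ c] conjI)
      assumption+
qed

end

end

lemma signed_bigraph_long_even_hole_free:
  assumes "signed_bigraph V X Y E sg" "\<not> has_induced_long_even_cycle V E"
  shows "long_even_hole_free_bigraph V X E"
proof -
  have V: "V = X \<union> Y" "X \<inter> Y = {}"
    using assms(1) unfolding signed_bigraph_def by simp_all
  have edge_sym: "E b a" and edge_V: "a \<in> V" and edge_sides: "a \<in> X \<longleftrightarrow> b \<in> Y"
    if "E a b" for a b
    using assms(1) that unfolding signed_bigraph_def by blast+
  show ?thesis
  proof
    show "symp E" by (rule sympI) (rule edge_sym)
    show "a \<in> X \<longleftrightarrow> b \<notin> X" if "E a b" for a b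
      using edge_sides[OF that] edge_V[OF edge_sym[OF that]] V by blast
  qed (use edge_V assms(2) in simp_all)
qed

theorem lemma4p1:
  fixes V X Y S H H' :: "'a set" and E sg :: "'a \<Rightarrow> 'a \<Rightarrow> bool"
  assumes "signed_bigraph V X Y E sg"
    and "separable V E"
    and "\<not> has_induced_long_even_cycle V E"
    and "\<not> has_induced_D V E sg"
    and "minimally_separates V E S H H'"
  shows "positive_biclique X Y E sg S \<and>
    (\<forall>u \<in> S. \<forall>v \<in> S. u \<noteq> v \<and> ((u \<in> X \<and> v \<in> X) \<or> (u \<in> Y \<and> v \<in> Y)) \<longrightarrow>
       (\<exists>w \<in> H. E u w \<and> E v w) \<and> (\<exists>w \<in> H'. E u w \<and> E v w))"
proof -
  interpret long_even_hole_free_bigraph V X E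
    using signed_bigraph_long_even_hole_free[OF assms(1,3)] .
  have disjoint: "X \<inter> Y = {}" using assms(1) unfolding signed_bigraph_def by simp
  have "E x y" if "x \<in> S \<inter> X" "y \<in> S \<inter> Y" for x y
    using separator_adjacent[OF assms(5)] that disjoint by blast
  moreover have "sg x y" if "x \<in> S" "y \<in> S" "E x y" for x y
    using separator_negative_edge_induces_D[OF assms(5) that, of sg] assms(4) by blast
  moreover have "(\<exists>w \<in> H. E u w \<and> E v w) \<and> (\<exists>w \<in> H'. E u w \<and> E v w)"
    if "u \<in> S" "v \<in> S" "u \<noteq> v \<and> ((u \<in> X \<and> v \<in> X) \<or> (u \<in> Y \<and> v \<in> Y))" for u v
    using separator_common_neighbours[OF assms(5)] that disjoint by blast
  ultimately show ?thesis unfolding positive_biclique_def by blast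
qed

end
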